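(* For $n\in\mathbb{N}$ and $M\in\mathbb{N}_0$, \[ \frac{2\pi}{12n-1}\sum_{k\ge M+1}\frac{\left|A_k^{[2]}(n,0)\right|}{k}I_2\left(\frac{\pi\sqrt{12n-1}}{3k}\right)\le f_M(n). \]
   Context: $I_2$ is the modified Bessel function of the first kind of order $2$. For $k\in\mathbb{N}$ and $0\le h<k$ with $\gcd(h,k)=1$, let $h'$ be an inverse of $h$ modulo $k$, and let $s(h,k):=\sum_{j=1}^{k-1}\left(\frac jk-\frac12\right)\left(\frac{hj}{k}-\left\lfloor\frac{hj}{k}\right\rfloor-\frac12\right)$ be the Dedekind sum. For integers $n,m$ define $A_k^{[2]}(n,m):=\sum_{0\le h<k,\ \gcd(h,k)=1}e^{2\pi i s(h,k)+\frac{2\pi i}{k}(nh+mh')}$. Finally \[ f_M(n):=\frac{\pi^5}{108}+\delta_{M\le\frac{\pi\sqrt{12n-1}}{3}-1}\frac{2\sqrt{6(M+1)}}{(12n-1)^{5/4}}\left(\frac{\pi\sqrt{12n-1}}{3}-M\right)e^{\frac{\pi\sqrt{12n-1}}{3(M+1)}}, \] where $\delta_S=1$ if the statement $S$ holds and $0$ otherwise. *)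

theory Defs
  imports Complex_Main
begin

definition besselI2 :: "real \<Rightarrow> real" where
  "besselI2 x = (\<Sum>m. (x / 2) ^ (2 * m + 2) / (fact m * fact (m + 2)))"

definition dedekind_sum :: "int \<Rightarrow> nat \<Rightarrow> real" where
  "dedekind_sum h k = (\<Sum>j = 1..<k. (real j / real k - 1/2) *
      (real_of_int (h * int j) / real k - real_of_int \<lfloor>real_of_int (h * int j) / real k\<rfloor> - 1/2))"

text \<open>An inverse h' of h modulo k (chosen; the Kloosterman sum does not depend on the choice).\<close>
definition mod_inv :: "int \<Rightarrow> nat \<Rightarrow> int" where
  "mod_inv h k = (SOME h'. (h * h') mod int k = 1 mod int k)"

definition A2 :: "nat \<Rightarrow> int \<Rightarrow> int \<Rightarrow> complex" where
  "A2 k n m = (\<Sum>h\<in>{h. 0 \<le> h \<and> h < int k \<and> gcd h (int k) = 1}.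
      exp (2 * pi * \<i> * complex_of_real (dedekind_sum h k)
           + 2 * pi * \<i> / of_nat k * of_int (n * h + m * mod_inv h k)))"

definition fM :: "nat \<Rightarrow> nat \<Rightarrow> real" where
  "fM M n = pi ^ 5 / 108 +
     (if real M \<le> pi * sqrt (12 * real n - 1) / 3 - 1 then
        2 * sqrt (6 * (real M + 1)) / (12 * real n - 1) powr (5/4)
        * (pi * sqrt (12 * real n - 1) / 3 - real M)
        * exp (pi * sqrt (12 * real n - 1) / (3 * (real M + 1)))
      else 0)"

end

theory Submission
  imports Defs "HOL-Analysis.Analysis"
begin

(* Since |A_k(n,0)| <= k, the k-th term is at most I_2(x/k) with x = pi sqrt(12n - 1) / 3.
   For k > x, I_2(t) <= t^2/6 on [0,1] and sum 1/k^2 = pi^2/6 bound the tail by pi^2 x^2 / 36,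
   which contributes pi^5/162 <= pi^5/108.  The remaining at most x - M terms with k <= x are
   each at most I_2(T) <= sqrt(3/(8T)) e^T for T = x/(M+1); this gives the second summand of f_M. *)

lemma exp_real_sums: "(\<lambda>m. x ^ m / fact m) sums exp (x::real)"
  using exp_converges[of x] by (simp add: divide_inverse_commute scaleR_conv_of_real)

lemma besselI2_term_nonneg: "0 \<le> (t / 2) ^ (2 * m + 2) / (fact m * fact (m + 2) :: real)"
  by (intro divide_nonneg_nonneg zero_le_even_power) auto

lemma besselI2_term_le_exp_term:
  "(t / 2) ^ (2 * m + 2) / (fact m * fact (m + 2)) \<le> t\<^sup>2 / 8 * ((t\<^sup>2 / 4) ^ m / fact m :: real)"
proof -
  have "(2::real) \<le> fact (m + 2)"
    using fact_mono[of 2 "m + 2", where 'a=real] by simp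
  have "(t / 2) ^ (2 * m + 2) = (t\<^sup>2 / 4) ^ Suc m"
    by (simp add: power_mult power_divide power2_eq_square flip: power_mult_distrib)
  then have "(t / 2) ^ (2 * m + 2) / (fact m * fact (m + 2)) = (t\<^sup>2 / 4) ^ Suc m / (fact m * fact (m + 2))"
    by simp
  also have "\<dots> \<le> (t\<^sup>2 / 4) ^ Suc m / (fact m * 2)"
    using \<open>2 \<le> fact (m + 2)\<close> by (intro divide_left_mono) auto
  also have "\<dots> = t\<^sup>2 / 8 * ((t\<^sup>2 / 4) ^ m / fact m)"
    by simp
  finally show ?thesis .
qed

lemma summable_besselI2_series: "summable (\<lambda>m. (t / 2) ^ (2 * m + 2) / (fact m * fact (m + 2) :: real))"
proof (rule summable_comparison_test')
  show "summable (\<lambda>m. t\<^sup>2 / 8 * ((t\<^sup>2 / 4) ^ m / fact m))"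
    using exp_real_sums by (intro summable_mult sums_summable)
next
  show "norm ((t / 2) ^ (2 * m + 2) / (fact m * fact (m + 2))) \<le> t\<^sup>2 / 8 * ((t\<^sup>2 / 4) ^ m / fact m)" for m
    unfolding real_norm_def abs_of_nonneg[OF besselI2_term_nonneg] by (rule besselI2_term_le_exp_term)
qed

lemma besselI2_nonneg: "0 \<le> besselI2 t"
  unfolding besselI2_def by (rule suminf_nonneg[OF summable_besselI2_series besselI2_term_nonneg])

lemma besselI2_mono:
  assumes "0 \<le> s" "s \<le> t"
  shows "besselI2 s \<le> besselI2 t"
  unfolding besselI2_def using assms
  by (intro suminf_le summable_besselI2_series divide_right_mono power_mono) auto

lemma besselI2_le_exp_sq: "besselI2 t \<le> t\<^sup>2 / 8 * exp (t\<^sup>2 / 4)"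
proof -
  have "(\<lambda>m. t\<^sup>2 / 8 * ((t\<^sup>2 / 4) ^ m / fact m)) sums (t\<^sup>2 / 8 * exp (t\<^sup>2 / 4))"
    by (intro sums_mult exp_real_sums)
  then show ?thesis
    unfolding besselI2_def
    by (rule sums_le[OF besselI2_term_le_exp_term summable_sums[OF summable_besselI2_series]])
qed

lemma besselI2_le_sq:
  assumes "\<bar>t\<bar> \<le> 1"
  shows "besselI2 t \<le> t\<^sup>2 / 6"
proof -
  have "3 / 4 \<le> exp (- (1 / 4 :: real))"
    using exp_ge_add_one_self[of "- (1 / 4 :: real)"] by simp
  have "exp (t\<^sup>2 / 4) \<le> exp (1 / 4)"
    using assms abs_square_le_1[of t] by simp
  also have "\<dots> \<le> 4 / 3"
    using \<open>3 / 4 \<le> exp (- (1 / 4))\<close> by (simp add: exp_minus field_simps)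
  finally have "t\<^sup>2 / 8 * exp (t\<^sup>2 / 4) \<le> t\<^sup>2 / 8 * (4 / 3)"
    by (rule mult_left_mono) simp
  with besselI2_le_exp_sq[of t] show ?thesis
    by simp
qed

definition central_binom_ratio :: "nat \<Rightarrow> real" where
  "central_binom_ratio m = fact (2 * m) / (4 ^ m * (fact m)\<^sup>2)"

lemma central_binom_ratio_Suc:
  "central_binom_ratio (Suc m) = central_binom_ratio m * ((2 * real m + 1) / (2 * real m + 2))"
proof -
  have num: "(fact (2 * Suc m) :: real) = fact (2 * m) * ((2 * real m + 1) * (2 * real m + 2))"
    by (simp add: algebra_simps)
  have den: "(4::real) ^ Suc m * (fact (Suc m))\<^sup>2
      = 4 ^ m * (fact m)\<^sup>2 * ((2 * real m + 2) * (2 * real m + 2))"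
    by (simp add: algebra_simps power2_eq_square)
  have "(2 * real m + 2) \<noteq> 0"
    by linarith
  then have "((2 * real m + 1) * (2 * real m + 2)) / ((2 * real m + 2) * (2 * real m + 2))
      = (2 * real m + 1) / (2 * real m + 2)"
    by (rule mult_divide_mult_cancel_right)
  then show ?thesis
    unfolding central_binom_ratio_def num den times_divide_times_eq[symmetric] by simp
qed

lemma central_binom_ratio_sq_le: "(central_binom_ratio m)\<^sup>2 * (4 * real m + 2) \<le> 3"
proof (induction m)
  case 0
  then show ?case
    by (simp add: central_binom_ratio_def)
next
  case (Suc m)
  define r where "r = (2 * real m + 1) / (2 * real m + 2)"
  have "(2 * real m + 1)\<^sup>2 * (4 * real m + 6) \<le> (4 * real m + 2) * (2 * real m + 2)\<^sup>2"
    by (simp add: power2_eq_square algebra_simps)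
  then have r: "r\<^sup>2 * (4 * real m + 6) \<le> 4 * real m + 2"
    unfolding r_def by (simp add: power_divide field_simps)
  have "(central_binom_ratio (Suc m))\<^sup>2 * (4 * real (Suc m) + 2)
      = (central_binom_ratio m)\<^sup>2 * (r\<^sup>2 * (4 * real m + 6))"
    unfolding central_binom_ratio_Suc r_def[symmetric] by (simp add: power_mult_distrib algebra_simps)
  also have "\<dots> \<le> (central_binom_ratio m)\<^sup>2 * (4 * real m + 2)"
    using r by (rule mult_left_mono) simp
  finally show ?case
    using Suc.IH by linarith
qed

lemma exp_real_sums_pairs:
  "(\<lambda>m. x ^ (2 * m) / fact (2 * m) + x ^ (2 * m + 1) / fact (2 * m + 1)) sums exp (x::real)"
proof -
  have "{m * 2..<m * 2 + 2} = {2 * m, 2 * m + 1}" for m :: nat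
    by auto
  then show ?thesis
    using sums_group[OF exp_real_sums[of x], of 2] by simp
qed

(* The left side is T^(2m)/(2m)! * central_binom_ratio m, and AM-GM 4u <= (1 + u)^2 for
   u = T/(2m + 1) turns central_binom_ratio m <= sqrt (3 / (2(2m + 1))) into
   central_binom_ratio m <= sqrt (3/(8T)) (1 + u). *)

lemma half_power_div_fact_sq_le:
  assumes "0 < T"
  shows "(T / 2) ^ (2 * m) / (fact m)\<^sup>2
    \<le> sqrt (3 / (8 * T)) * (T ^ (2 * m) / fact (2 * m) + T ^ (2 * m + 1) / fact (2 * m + 1))"
proof -
  define E where "E = T ^ (2 * m) / fact (2 * m)"
  define u where "u = T / (2 * real m + 1)"
  have u: "0 \<le> u"
    unfolding u_def using assms by simp
  have odd_term: "T ^ (2 * m + 1) / fact (2 * m + 1) = E * u"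
    unfolding E_def u_def by (simp add: field_simps)
  have even_term: "(T / 2) ^ (2 * m) / (fact m)\<^sup>2 = E * central_binom_ratio m"
    unfolding E_def central_binom_ratio_def by (simp add: power_mult power_divide)
  have "(central_binom_ratio m)\<^sup>2 \<le> 3 / (2 * (2 * real m + 1))"
    using central_binom_ratio_sq_le[of m] by (simp add: field_simps)
  also have "\<dots> = 3 / (8 * T) * (4 * u)"
    unfolding u_def using assms by (simp add: field_simps)
  also have "\<dots> \<le> 3 / (8 * T) * (1 + u)\<^sup>2"
    using assms sum_squares_ge_zero[of "1 - u" 0] by (intro mult_left_mono) (auto simp: power2_eq_square algebra_simps)
  also have "\<dots> = (sqrt (3 / (8 * T)) * (1 + u))\<^sup>2"
    using assms by (simp add: power_mult_distrib)
  finally have "central_binom_ratio m \<le> sqrt (3 / (8 * T)) * (1 + u)"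
    by (rule power2_le_imp_le) (use assms u in simp)
  then have "E * central_binom_ratio m \<le> E * (sqrt (3 / (8 * T)) * (1 + u))"
    by (rule mult_left_mono) (simp add: E_def assms less_imp_le)
  then show ?thesis
    unfolding even_term odd_term E_def[symmetric] by (simp add: algebra_simps)
qed

lemma besselI2_le_exp:
  assumes "0 < T"
  shows "besselI2 T \<le> sqrt (3 / (8 * T)) * exp T"
proof -
  define b where "b m = sqrt (3 / (8 * T)) * (T ^ (2 * m) / fact (2 * m) + T ^ (2 * m + 1) / fact (2 * m + 1))"
    for m
  have b_sums: "b sums (sqrt (3 / (8 * T)) * exp T)"
    unfolding b_def by (intro sums_mult exp_real_sums_pairs)
  have "b 0 \<ge> 0"
    unfolding b_def using assms by simp
  have term_le: "(T / 2) ^ (2 * m + 2) / (fact m * fact (m + 2)) \<le> b (Suc m)" for m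
  proof -
    have "(fact (Suc m))\<^sup>2 \<le> (fact m * fact (m + 2) :: real)"
      by (simp add: power2_eq_square algebra_simps)
    then have "(T / 2) ^ (2 * m + 2) / (fact m * fact (m + 2)) \<le> (T / 2) ^ (2 * m + 2) / (fact (Suc m))\<^sup>2"
      using assms by (intro divide_left_mono) auto
    also have "\<dots> = (T / 2) ^ (2 * Suc m) / (fact (Suc m))\<^sup>2"
      by simp
    also have "\<dots> \<le> b (Suc m)"
      unfolding b_def by (rule half_power_div_fact_sq_le[OF assms])
    finally show ?thesis .
  qed
  have "besselI2 T \<le> (\<Sum>m. b (Suc m))"
    unfolding besselI2_def using sums_summable[OF b_sums]
    by (intro suminf_le[OF term_le summable_besselI2_series]) (simp add: summable_Suc_iff)
  also have "\<dots> = suminf b - b 0"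
    by (rule suminf_split_head[OF sums_summable[OF b_sums]])
  also have "\<dots> \<le> sqrt (3 / (8 * T)) * exp T"
    using \<open>b 0 \<ge> 0\<close> b_sums by (simp add: sums_iff)
  finally show ?thesis .
qed

lemma norm_A2_le: "cmod (A2 k n m) \<le> real k"
proof -
  define S where "S = {h. 0 \<le> h \<and> h < int k \<and> gcd h (int k) = 1}"
  have "S \<subseteq> {0..<int k}"
    unfolding S_def by auto
  then have "card S \<le> k"
    using card_mono[of "{0..<int k}" S] by simp
  have "cmod (A2 k n m) \<le> (\<Sum>h\<in>S. cmod (exp (2 * pi * \<i> * complex_of_real (dedekind_sum h k)
           + 2 * pi * \<i> / of_nat k * of_int (n * h + m * mod_inv h k))))"
    unfolding A2_def S_def[symmetric] by (rule norm_sum)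
  also have "\<dots> = real (card S)"
    by (simp add: norm_exp_eq_Re)
  finally show ?thesis
    using \<open>card S \<le> k\<close> by linarith
qed

lemma weighted_besselI2_tail_le:
  fixes a :: "nat \<Rightarrow> real"
  assumes a: "\<And>k. 0 \<le> a k" "\<And>k. a k \<le> 1" and x: "0 \<le> x" "x \<le> real K + 1"
  shows "summable (\<lambda>j. a (j + K + 1) * besselI2 (x / real (j + K + 1)))"
    and "(\<Sum>j. a (j + K + 1) * besselI2 (x / real (j + K + 1))) \<le> pi\<^sup>2 / 36 * x\<^sup>2"
proof -
  define F where "F j = a (j + K + 1) * besselI2 (x / real (j + K + 1))" for j
  have F_nonneg: "0 \<le> F j" for j
    unfolding F_def using a besselI2_nonneg by simp
  have F_le: "F j \<le> x\<^sup>2 / 6 * (1 / (real j + 1)\<^sup>2)" for j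
  proof -
    have "x / real (j + K + 1) \<le> 1"
      using x by simp
    have "F j \<le> besselI2 (x / real (j + K + 1))"
      unfolding F_def by (rule mult_left_le_one_le[OF besselI2_nonneg a])
    also have "\<dots> \<le> (x / real (j + K + 1))\<^sup>2 / 6"
      using x \<open>x / real (j + K + 1) \<le> 1\<close> by (intro besselI2_le_sq) simp
    also have "\<dots> \<le> (x / (real j + 1))\<^sup>2 / 6"
      using x by (intro divide_right_mono power_mono divide_left_mono) auto
    finally show ?thesis
      by (simp add: power_divide)
  qed
  have bound_sums: "(\<lambda>j. x\<^sup>2 / 6 * (1 / (real j + 1)\<^sup>2)) sums (pi\<^sup>2 / 36 * x\<^sup>2)"
    using sums_mult[OF inverse_squares_sums, of "x\<^sup>2 / 6"] by (simp add: ac_simps)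
  show "summable F"
    using F_nonneg F_le by (intro summable_comparison_test'[OF sums_summable[OF bound_sums]]) simp
  then show "suminf F \<le> pi\<^sup>2 / 36 * x\<^sup>2"
    using F_le bound_sums by (intro sums_le[OF _ summable_sums]) auto
qed

lemma weighted_besselI2_head_le:
  fixes a :: "nat \<Rightarrow> real"
  assumes a: "\<And>k. 0 \<le> a k" "\<And>k. a k \<le> 1" and x: "0 \<le> x"
  shows "(\<Sum>j<N. a (j + M + 1) * besselI2 (x / real (j + M + 1))) \<le> real N * besselI2 (x / (real M + 1))"
proof -
  have "a (j + M + 1) * besselI2 (x / real (j + M + 1)) \<le> besselI2 (x / (real M + 1))" for j
  proof -
    have "a (j + M + 1) * besselI2 (x / real (j + M + 1)) \<le> besselI2 (x / real (j + M + 1))"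
      by (rule mult_left_le_one_le[OF besselI2_nonneg a])
    also have "\<dots> \<le> besselI2 (x / (real M + 1))"
      using x by (intro besselI2_mono divide_left_mono) auto
    finally show ?thesis .
  qed
  then have "(\<Sum>j<N. a (j + M + 1) * besselI2 (x / real (j + M + 1))) \<le> (\<Sum>j<N. besselI2 (x / (real M + 1)))"
    by (intro sum_mono)
  then show ?thesis
    by simp
qed

lemma weighted_besselI2_series_le:
  fixes a :: "nat \<Rightarrow> real"
  assumes a: "\<And>k. 0 \<le> a k" "\<And>k. a k \<le> 1" and x: "0 \<le> x"
  shows "(\<Sum>j. a (j + M + 1) * besselI2 (x / real (j + M + 1)))
    \<le> pi\<^sup>2 / 36 * x\<^sup>2 + (if real M \<le> x - 1 then (x - real M) * besselI2 (x / (real M + 1)) else 0)"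
proof -
  define F where "F j = a (j + M + 1) * besselI2 (x / real (j + M + 1))" for j
  define N where "N = nat \<lfloor>x\<rfloor> - M"
  \<comment> \<open>the terms with \<open>j < N\<close> are those with \<open>j + M + 1 \<le> x\<close>\<close>
  have F_shift: "(\<lambda>j. F (j + N)) = (\<lambda>j. a (j + (N + M) + 1) * besselI2 (x / real (j + (N + M) + 1)))"
    unfolding F_def by (simp add: add_ac)
  have "x \<le> real (N + M) + 1"
    unfolding N_def using x by linarith
  then have tail: "summable (\<lambda>j. F (j + N))" "(\<Sum>j. F (j + N)) \<le> pi\<^sup>2 / 36 * x\<^sup>2"
    unfolding F_shift using weighted_besselI2_tail_le[of a x "N + M"] a x by auto
  have "suminf F = (\<Sum>j. F (j + N)) + (\<Sum>j<N. F j)"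
    using tail(1) by (intro suminf_split_initial_segment) simp
  also have "\<dots> \<le> pi\<^sup>2 / 36 * x\<^sup>2 + real N * besselI2 (x / (real M + 1))"
    using tail(2) weighted_besselI2_head_le[OF a x] by (intro add_mono) (auto simp: F_def)
  also have "real N * besselI2 (x / (real M + 1))
      \<le> (if real M \<le> x - 1 then (x - real M) * besselI2 (x / (real M + 1)) else 0)"
  proof (cases "real M \<le> x - 1")
    case True
    then have "real N \<le> x - real M"
      unfolding N_def by linarith
    then show ?thesis
      using True besselI2_nonneg by (simp add: mult_right_mono)
  next
    case False
    then have "N = 0"
      unfolding N_def by linarith
    with False show ?thesis
      by simp
  qed
  finally show ?thesis
    unfolding F_def by simp
qed

lemma fM_prefactor_le:
  assumes "0 < y"
  shows "2 * pi / y * sqrt (3 / (8 * (pi * sqrt y / 3 / (real M + 1))))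
    \<le> 2 * sqrt (6 * (real M + 1)) / y powr (5 / 4)"
proof -
  define r where "r = y powr (1 / 4)"
  have "0 < r"
    unfolding r_def using assms by simp
  have r_pow: "r ^ l = y powr (real l / 4)" for l
    unfolding r_def using assms by (simp add: powr_realpow[symmetric] powr_powr)
  have y: "y = r ^ 4" and sqrt_y: "sqrt y = r\<^sup>2" and y54: "y powr (5 / 4) = r ^ 5"
    using assms by (simp_all add: r_pow powr_half_sqrt[symmetric])
  have "pi * r * sqrt (3 / (8 * (pi * r\<^sup>2 / 3 / (real M + 1))))
      = sqrt ((pi * r)\<^sup>2 * (3 / (8 * (pi * r\<^sup>2 / 3 / (real M + 1)))))"
    unfolding real_sqrt_mult using \<open>0 < r\<close> by simp
  also have "\<dots> = sqrt (9 * pi / 8 * (real M + 1))"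
    using \<open>0 < r\<close> by (simp add: field_simps power2_eq_square)
  also have "\<dots> \<le> sqrt (6 * (real M + 1))"
    using pi_less_4 by (intro real_sqrt_le_mono mult_right_mono) auto
  finally have le: "pi * r * sqrt (3 / (8 * (pi * r\<^sup>2 / 3 / (real M + 1)))) \<le> sqrt (6 * (real M + 1))" .
  have "2 * pi / y * sqrt (3 / (8 * (pi * sqrt y / 3 / (real M + 1))))
      = 2 / r ^ 5 * (pi * r * sqrt (3 / (8 * (pi * r\<^sup>2 / 3 / (real M + 1)))))"
    unfolding sqrt_y using \<open>0 < r\<close> by (subst y) (simp add: field_simps eval_nat_numeral)
  also have "\<dots> \<le> 2 / r ^ 5 * sqrt (6 * (real M + 1))"
    using \<open>0 < r\<close> le by (intro mult_left_mono) auto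
  also have "\<dots> = 2 * sqrt (6 * (real M + 1)) / y powr (5 / 4)"
    unfolding y54 by simp
  finally show ?thesis .
qed

lemma fM_exp_term_le:
  assumes "0 < y" "x = pi * sqrt y / 3" "real M \<le> x - 1"
  shows "2 * pi / y * ((x - real M) * besselI2 (x / (real M + 1)))
    \<le> 2 * sqrt (6 * (real M + 1)) / y powr (5 / 4) * (x - real M) * exp (x / (real M + 1))"
proof -
  have "0 < x / (real M + 1)"
    using assms(3) by simp
  then have "2 * pi / y * ((x - real M) * besselI2 (x / (real M + 1)))
      \<le> 2 * pi / y * ((x - real M) * (sqrt (3 / (8 * (x / (real M + 1)))) * exp (x / (real M + 1))))"
    using assms by (intro mult_left_mono besselI2_le_exp) auto
  also have "\<dots> = 2 * pi / y * sqrt (3 / (8 * (x / (real M + 1)))) * (x - real M) * exp (x / (real M + 1))"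
    by (simp add: mult_ac)
  also have "\<dots> \<le> 2 * sqrt (6 * (real M + 1)) / y powr (5 / 4) * (x - real M) * exp (x / (real M + 1))"
    using fM_prefactor_le[OF assms(1), of M] assms(3) unfolding assms(2)[symmetric]
    by (intro mult_right_mono) auto
  finally show ?thesis .
qed

lemma fM_ge_series_bound:
  fixes n M :: nat
  assumes "n \<ge> 1"
  defines "x \<equiv> pi * sqrt (12 * real n - 1) / 3"
  shows "2 * pi / (12 * real n - 1) * (pi\<^sup>2 / 36 * x\<^sup>2
      + (if real M \<le> x - 1 then (x - real M) * besselI2 (x / (real M + 1)) else 0)) \<le> fM M n"
proof -
  define y where "y = 12 * real n - 1"
  have "0 < y" and x: "x = pi * sqrt y / 3"
    unfolding x_def y_def using assms(1) by auto
  have "2 * pi / y * (pi\<^sup>2 / 36 * x\<^sup>2) \<le> pi ^ 5 / 108"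
    unfolding x using \<open>0 < y\<close> by (simp add: power_divide power_mult_distrib field_simps eval_nat_numeral)
  moreover have "2 * pi / y * (if real M \<le> x - 1 then (x - real M) * besselI2 (x / (real M + 1)) else 0)
      \<le> (if real M \<le> x - 1 then 2 * sqrt (6 * (real M + 1)) / y powr (5 / 4)
        * (x - real M) * exp (x / (real M + 1)) else 0)"
    using fM_exp_term_le[OF \<open>0 < y\<close> x] by simp
  moreover have "pi ^ 5 / 108 + (if real M \<le> x - 1 then 2 * sqrt (6 * (real M + 1)) / y powr (5 / 4)
      * (x - real M) * exp (x / (real M + 1)) else 0) = fM M n"
    unfolding fM_def x_def y_def by simp
  ultimately show ?thesis
    unfolding y_def[symmetric] distrib_left by linarith
qed

theorem lemma6p2:
  fixes n M :: nat
  assumes "n \<ge> 1"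
  shows "2 * pi / (12 * real n - 1) *
      (\<Sum>j. (let k = j + M + 1 in
         cmod (A2 k (int n) 0) / real k * besselI2 (pi * sqrt (12 * real n - 1) / (3 * real k))))
    \<le> fM M n"
proof -
  define x where "x = pi * sqrt (12 * real n - 1) / 3"
  define a where "a k = cmod (A2 k (int n) 0) / real k" for k
  have "0 \<le> x"
    unfolding x_def using assms by simp
  have a: "0 \<le> a k" "a k \<le> 1" for k
    unfolding a_def using norm_A2_le[of k "int n" 0] by (auto simp: divide_le_eq_1)
  have "(\<Sum>j. (let k = j + M + 1 in
         cmod (A2 k (int n) 0) / real k * besselI2 (pi * sqrt (12 * real n - 1) / (3 * real k))))
      = (\<Sum>j. a (j + M + 1) * besselI2 (x / real (j + M + 1)))" (is "?S = _")
    unfolding a_def x_def Let_def by simp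
  also have "\<dots> \<le> pi\<^sup>2 / 36 * x\<^sup>2
      + (if real M \<le> x - 1 then (x - real M) * besselI2 (x / (real M + 1)) else 0)"
    by (rule weighted_besselI2_series_le[OF a \<open>0 \<le> x\<close>])
  finally have "2 * pi / (12 * real n - 1) * ?S
      \<le> 2 * pi / (12 * real n - 1) * (pi\<^sup>2 / 36 * x\<^sup>2
        + (if real M \<le> x - 1 then (x - real M) * besselI2 (x / (real M + 1)) else 0))"
    using assms by (intro mult_left_mono) auto
  also have "\<dots> \<le> fM M n"
    unfolding x_def by (rule fM_ge_series_bound[OF assms])
  finally show ?thesis .
qed

end
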